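(* Let $G\neq \{0\}$ be a finite abelian group. Let $B$ be a zero-sum sequence over $G$ and let $g \in G\setminus \{0\}$. Then $\max \mathsf{L}(B(-g)g)= 1+\max \mathsf{L}(B)$. In particular, $\mathsf{D}_{k+1}(G)\ge \mathsf{D}_{k}(G)+ 2$ for each $k \in \mathbb{N}$. Moreover, if $C$ is a zero-sum sequence over $G$ with $\max \mathsf{L}(C)\le k$ and $|C|= \mathsf{D}_k(G)$, then $0$ does not occur as a term of $C$.
   Context: A sequence over $G$ is an element of the multiplicatively written free abelian monoid over $G$ (finite unordered list of elements with repetitions); $B(-g)g$ denotes $B$ with the two terms $-g$ and $g$ appended. Zero-sum means the terms sum to $0$; a minimal zero-sum sequence is a non-empty zero-sum sequence with no proper non-empty zero-sum subsequence; for a zero-sum sequence $B$, $\mathsf{L}(B)$ is the set of all $t$ such that $B$ is a product of $t$ minimal zero-sum sequences. $\mathsf{D}_k(G)$ is the smallest $\ell$ such that every sequence over $G$ of length at least $\ell$ has $k$ disjoint non-empty zero-sum subsequences. *)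

theory Defs
  imports Main "HOL-Library.Multiset"
begin

text \<open>Sequences over an abelian group are finite multisets of elements.
  The group G is the whole (finite) type 'a of class ab_group_add.\<close>

definition zero_sum :: "'a::ab_group_add multiset \<Rightarrow> bool" where
  "zero_sum B \<longleftrightarrow> sum_mset B = 0"

definition minimal_zero_sum :: "'a::ab_group_add multiset \<Rightarrow> bool" where
  "minimal_zero_sum B \<longleftrightarrow> B \<noteq> {#} \<and> zero_sum B \<and>
     (\<forall>A. A \<subseteq># B \<and> A \<noteq> {#} \<and> zero_sum A \<longrightarrow> A = B)"

definition Lset :: "'a::ab_group_add multiset \<Rightarrow> nat set" where
  "Lset B = {t. \<exists>F. (\<forall>A\<in>#F. minimal_zero_sum A) \<and> sum_mset F = B \<and> size F = t}"

definition has_k_disjoint_zs :: "'a::ab_group_add multiset \<Rightarrow> nat \<Rightarrow> bool" where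
  "has_k_disjoint_zs S k \<longleftrightarrow>
     (\<exists>F. size F = k \<and> (\<forall>A\<in>#F. A \<noteq> {#} \<and> zero_sum A) \<and> sum_mset F \<subseteq># S)"

definition Dk :: "'a::ab_group_add set \<Rightarrow> nat \<Rightarrow> nat" where
  "Dk G k = (LEAST l. \<forall>S. set_mset S \<subseteq> G \<and> size S \<ge> l \<longrightarrow> has_k_disjoint_zs S k)"

end

theory Submission
  imports Defs
begin

text \<open>
  Take a factorization of \<open>B(-g)g\<close> of maximal length. Either it contains the atom \<open>(-g)g\<close>,
  and the remaining atoms factor \<open>B\<close>, or \<open>-g\<close> and \<open>g\<close> lie in distinct atoms \<open>U(-g)\<close> and
  \<open>Vg\<close>; then \<open>UV\<close> is a non-empty zero-sum sequence and replacing the two atoms by it still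
  leaves at least one atom more than the other atoms.

  A zero-sum sequence \<open>C\<close> with \<open>max L(C) \<le> k\<close> has length at most \<open>D\<^sub>k(G)\<close>: otherwise
  dropping one term leaves \<open>k\<close> disjoint zero-sum subsequences, and together with their
  non-empty complement in \<open>C\<close> they refine to more than \<open>k\<close> atoms. Conversely, a sequence of
  length \<open>D\<^sub>k(G) - 1\<close> without \<open>k\<close> disjoint zero-sum subsequences, completed by the negative of
  its sum, attains this bound. Appending \<open>(-g)g\<close> to it gives \<open>D\<^sub>k\<^sub>+\<^sub>1(G) \<ge> D\<^sub>k(G) + 2\<close>, and
  replacing a term \<open>0\<close> of an extremal \<open>C\<close> by \<open>(-g)g\<close> would exceed the bound.
\<close>

lemma zero_sum_plus: "zero_sum A \<Longrightarrow> zero_sum C \<Longrightarrow> zero_sum (A + C)"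
  by (simp add: zero_sum_def)

lemma zero_sum_minus: "zero_sum B \<Longrightarrow> zero_sum A \<Longrightarrow> A \<subseteq># B \<Longrightarrow> zero_sum (B - A)"
  by (simp add: zero_sum_def sum_mset_diff)

lemma zero_sum_sum_mset: "(\<forall>X\<in>#F. zero_sum X) \<Longrightarrow> zero_sum (sum_mset F)"
  by (induction F) (auto simp: zero_sum_def)

lemma zero_sum_inverse_pair: "zero_sum {#-g, g#}"
  by (simp add: zero_sum_def)

lemma minimal_zero_sumD: "minimal_zero_sum A \<Longrightarrow> A \<noteq> {#} \<and> zero_sum A"
  by (simp add: minimal_zero_sum_def)

lemma minimal_zero_sum_zero: "minimal_zero_sum {#0::'a::ab_group_add#}"
  unfolding minimal_zero_sum_def zero_sum_def
  using nonempty_subseteq_mset_iff_single[of _ 0 True] by auto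

lemma minimal_zero_sum_inverse_pair:
  fixes g :: "'a::ab_group_add"
  assumes "g \<noteq> 0"
  shows "minimal_zero_sum {#-g, g#}"
  unfolding minimal_zero_sum_def
proof (intro conjI allI impI)
  fix A assume A: "A \<subseteq># {#-g, g#} \<and> A \<noteq> {#} \<and> zero_sum A"
  show "A = {#-g, g#}"
  proof (rule ccontr)
    assume "A \<noteq> {#-g, g#}"
    then have "size A < 2" using A mset_subset_size[of A "{#-g, g#}"] by fastforce
    then obtain x where x: "A = {#x#}"
      using A by (metis One_nat_def less_2_cases size_1_singleton_mset size_eq_0_iff_empty)
    with A have "x = -g \<or> x = g" by (auto simp: insert_subset_eq_iff)
    with A x assms show False by (auto simp: zero_sum_def)
  qed
qed (simp_all add: zero_sum_inverse_pair)

lemma minimal_zero_sum_containing_inverse_pair: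
  assumes "minimal_zero_sum (add_mset (-g) A)" and "g \<in># A"
  shows "add_mset (-g) A = {#-g, g#}"
proof -
  have "{#-g, g#} \<subseteq># add_mset (-g) A" using assms(2) by (simp add: mset_subset_eq_single)
  with assms(1) show ?thesis
    unfolding minimal_zero_sum_def using zero_sum_inverse_pair by (metis empty_not_add_mset)
qed

lemma size_le_size_sum_mset: "(\<forall>A\<in>#F. A \<noteq> {#}) \<Longrightarrow> size F \<le> size (sum_mset F)"
  by (induction F) (auto simp: Suc_le_eq nonempty_has_size)

lemma sum_mset_mono_submset: "F \<subseteq># G \<Longrightarrow> sum_mset F \<subseteq># sum_mset (G :: 'a multiset multiset)"
  by (metis mset_subset_eq_add_left subset_mset.add_diff_inverse sum_mset.union)

lemma ex_submset_size: "n \<le> size S \<Longrightarrow> \<exists>T. T \<subseteq># S \<and> size T = n"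
proof -
  assume "n \<le> size S"
  moreover obtain xs where "mset xs = S" using ex_mset by blast
  moreover have "mset (take n xs) \<subseteq># mset xs"
    by (metis append_take_drop_id mset_append mset_subset_eq_add_left)
  ultimately show ?thesis by (metis length_take min.absorb2 size_mset)
qed

lemma member_sum_mset_split:
  assumes "x \<in># sum_mset F"
  obtains A F' where "F = add_mset (add_mset x A) F'"
proof -
  from assms obtain X where "X \<in># F" "x \<in># X" by (induction F) auto
  then show thesis
    using that by (metis insert_DiffM)
qed

subsection \<open>Sets of lengths\<close>

lemma LsetI: "(\<forall>A\<in>#F. minimal_zero_sum A) \<Longrightarrow> size F \<in> Lset (sum_mset F)"
  unfolding Lset_def by blast

lemma LsetE:
  assumes "t \<in> Lset B"
  obtains F where "\<forall>A\<in>#F. minimal_zero_sum A" "sum_mset F = B" "size F = t"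
  using assms unfolding Lset_def by blast

lemma one_in_Lset: "minimal_zero_sum A \<Longrightarrow> 1 \<in> Lset A"
  using LsetI[of "{#A#}"] by simp

lemma Lset_plus: "s \<in> Lset A \<Longrightarrow> t \<in> Lset C \<Longrightarrow> s + t \<in> Lset (A + C)"
  by (elim LsetE) (metis LsetI set_mset_union Un_iff size_union sum_mset.union)

lemma Lset_le_size: "t \<in> Lset B \<Longrightarrow> t \<le> size B"
  by (metis LsetE minimal_zero_sumD size_le_size_sum_mset)

lemma finite_Lset: "finite (Lset B)"
  using Lset_le_size by (meson finite_atMost finite_subset atMost_iff subsetI)

lemma Lset_nonempty: "zero_sum B \<Longrightarrow> Lset B \<noteq> {}"
proof (induction "size B" arbitrary: B rule: less_induct)
  case less
  show ?case
  proof (cases "minimal_zero_sum B \<or> B = {#}")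
    case True
    then show ?thesis using one_in_Lset LsetI[of "{#}"] by auto
  next
    case False
    then obtain A where A: "A \<subset># B" "A \<noteq> {#}" "zero_sum A"
      using less.prems unfolding minimal_zero_sum_def by (meson subset_mset.le_neq_trans)
    then have "size A < size B" "size (B - A) < size B"
      using mset_subset_size[OF A(1)] by (auto simp: size_Diff_submset nonempty_has_size)
    with less A obtain s t where "s \<in> Lset A" "t \<in> Lset (B - A)"
      by (metis zero_sum_minus subset_mset.less_imp_le ex_in_conv)
    from Lset_plus[OF this] A(1) show ?thesis
      by (metis empty_iff subset_mset.add_diff_inverse subset_mset.less_imp_le)
  qed
qed

lemma Lset_pos: "t \<in> Lset B \<Longrightarrow> B \<noteq> {#} \<Longrightarrow> 1 \<le> t"
  by (metis LsetE One_nat_def Suc_leI neq0_conv size_eq_0_iff_empty sum_mset.empty)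

lemma Max_Lset_in: "zero_sum B \<Longrightarrow> Max (Lset B) \<in> Lset B"
  by (simp add: Lset_nonempty finite_Lset)

lemma Max_Lset_ge: "t \<in> Lset B \<Longrightarrow> t \<le> Max (Lset B)"
  by (simp add: finite_Lset)

lemma Max_Lset_leI: "zero_sum B \<Longrightarrow> (\<And>t. t \<in> Lset B \<Longrightarrow> t \<le> k) \<Longrightarrow> Max (Lset B) \<le> k"
  using Max_Lset_in by blast

lemma size_le_Max_Lset_sum_mset:
  "(\<forall>X\<in>#F. X \<noteq> {#} \<and> zero_sum X) \<Longrightarrow> size F \<le> Max (Lset (sum_mset F))"
proof (induction F)
  case empty
  then show ?case by simp
next
  case (add A F)
  then obtain s where s: "s \<in> Lset A" "1 \<le> s"
    using Lset_nonempty Lset_pos by (metis ex_in_conv union_single_eq_member)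
  have "zero_sum (sum_mset F)" using add.prems by (simp add: zero_sum_sum_mset)
  then have "s + Max (Lset (sum_mset F)) \<in> Lset (sum_mset (add_mset A F))"
    using Lset_plus[OF s(1) Max_Lset_in] by simp
  then show ?case using add s(2) Max_Lset_ge[of "s + _"] by fastforce
qed

subsection \<open>Appending an inverse pair\<close>

lemma Max_Lset_plus_inverse_pair_ge:
  fixes g :: "'a::ab_group_add"
  assumes "zero_sum B" and "g \<noteq> 0"
  shows "1 + Max (Lset B) \<le> Max (Lset (B + {#-g, g#}))"
  using Lset_plus[OF Max_Lset_in[OF assms(1)] one_in_Lset[OF minimal_zero_sum_inverse_pair]]
    Max_Lset_ge assms(2) by fastforce

lemma Max_Lset_plus_inverse_pair_le:
  fixes g :: "'a::ab_group_add"
  assumes B: "zero_sum B" and g: "g \<noteq> 0"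
  shows "Max (Lset (B + {#-g, g#})) \<le> 1 + Max (Lset B)"
proof -
  obtain F where F: "\<forall>A\<in>#F. minimal_zero_sum A" "sum_mset F = B + {#-g, g#}"
      "size F = Max (Lset (B + {#-g, g#}))"
    using Max_Lset_in[OF zero_sum_plus[OF B zero_sum_inverse_pair[of g]]] by (rule LsetE)
  then have "-g \<in># sum_mset F" by simp
  then obtain U F1 where F1: "F = add_mset (add_mset (-g) U) F1"
    by (rule member_sum_mset_split)
  have U_min: "minimal_zero_sum (add_mset (-g) U)" using F(1) F1 by simp
  then have "sum_mset U = g" by (simp add: minimal_zero_sum_def zero_sum_def add_eq_0_iff)
  show ?thesis
  proof (cases "g \<in># U")
    case True
    then have "sum_mset F1 = B"
      using F(2) F1 minimal_zero_sum_containing_inverse_pair[OF U_min] by simp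
    then have "size F1 \<in> Lset B" using LsetI[of F1] F(1) F1 by simp
    then show ?thesis using F(3) F1 Max_Lset_ge[of "size F1" B] by simp
  next
    case False
    have "sum_mset F1 + U = B + {#g#}" using F(2) F1 by (simp add: add.commute)
    with False have "g \<in># sum_mset F1" by (metis add_mset_add_single union_iff union_single_eq_member)
    then obtain V F2 where F2: "F1 = add_mset (add_mset g V) F2"
      by (rule member_sum_mset_split)
    have "minimal_zero_sum (add_mset g V)" using F(1) F1 F2 by simp
    then have "sum_mset V = -g" by (simp add: minimal_zero_sum_def zero_sum_def add_eq_0_iff)
    text \<open>Merging the two atoms through \<open>-g\<close> and \<open>g\<close> leaves the non-empty zero-sum \<open>UV\<close>.\<close>
    have B_eq: "B = sum_mset (add_mset (U + V) F2)" using F(2) F1 F2 by (simp add: add_ac)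
    have atoms: "\<forall>X\<in>#add_mset (U + V) F2. X \<noteq> {#} \<and> zero_sum X"
    proof -
      have "U \<noteq> {#}" using \<open>sum_mset U = g\<close> g by auto
      moreover have "zero_sum (U + V)" using \<open>sum_mset U = g\<close> \<open>sum_mset V = -g\<close>
        by (simp add: zero_sum_def)
      moreover have "\<forall>X\<in>#F2. X \<noteq> {#} \<and> zero_sum X"
        using F(1) F1 F2 minimal_zero_sumD by (metis union_iff add_mset_add_single)
      ultimately show ?thesis by simp
    qed
    have "1 + size F2 \<le> Max (Lset B)" using size_le_Max_Lset_sum_mset[OF atoms] B_eq by simp
    then show ?thesis using F(3) F1 F2 by simp
  qed
qed

lemma Max_Lset_plus_inverse_pair:
  fixes g :: "'a::ab_group_add"
  assumes "zero_sum B" and "g \<noteq> 0"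
  shows "Max (Lset (B + {#-g, g#})) = 1 + Max (Lset B)"
  using Max_Lset_plus_inverse_pair_ge[OF assms] Max_Lset_plus_inverse_pair_le[OF assms] by simp

subsection \<open>Disjoint zero-sum subsequences\<close>

text \<open>Pigeonhole on the \<open>|G| + 1\<close> prefix sums of an enumeration of \<open>S\<close>.\<close>
lemma ex_zero_sum_submset:
  fixes S :: "'a::{ab_group_add, finite} multiset"
  assumes "card (UNIV :: 'a set) \<le> size S"
  shows "\<exists>A. A \<subseteq># S \<and> A \<noteq> {#} \<and> zero_sum A"
proof -
  obtain xs where xs: "mset xs = S" using ex_mset by blast
  define p where "p i = sum_list (take i xs)" for i
  have "card (p ` {0..length xs}) < card {0..length xs}"
    using card_mono[of UNIV "p ` {0..length xs}"] assms xs by auto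
  then have "\<not> inj_on p {0..length xs}" using card_image by fastforce
  then obtain i j where ij: "i < j" "j \<le> length xs" "p i = p j"
    unfolding inj_on_def by (metis atLeastAtMost_iff linorder_neqE_nat)
  define ys where "ys = take (j - i) (drop i xs)"
  have "take j xs = take i xs @ ys"
    unfolding ys_def using ij by (metis le_add_diff_inverse less_imp_le take_add)
  then have "zero_sum (mset ys)" using ij(3) by (simp add: p_def zero_sum_def sum_mset_sum_list)
  moreover have "mset ys \<noteq> {#}" using ij unfolding ys_def by simp
  moreover have "mset ys \<subseteq># S"
    unfolding ys_def xs[symmetric]
    by (metis append_take_drop_id mset_append mset_subset_eq_add_left mset_subset_eq_add_right
        subset_mset.order_trans)
  ultimately show ?thesis by blast
qed

lemma has_k_disjoint_zs_if_size_ge: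
  fixes S :: "'a::{ab_group_add, finite} multiset"
  shows "k * card (UNIV :: 'a set) \<le> size S \<Longrightarrow> has_k_disjoint_zs S k"
proof (induction k arbitrary: S)
  case 0
  then show ?case unfolding has_k_disjoint_zs_def by (auto intro!: exI[of _ "{#}"])
next
  case (Suc k)
  obtain T where T: "T \<subseteq># S" "size T = card (UNIV :: 'a set)"
    using ex_submset_size[of "card (UNIV :: 'a set)" S] Suc.prems by auto
  then obtain A where A: "A \<subseteq># T" "A \<noteq> {#}" "zero_sum A"
    using ex_zero_sum_submset[of T] by auto
  then have "k * card (UNIV :: 'a set) \<le> size (S - A)"
    using T Suc.prems size_mset_mono[OF A(1)] by (simp add: size_Diff_submset)
  then obtain F where F: "size F = k" "\<forall>X\<in>#F. X \<noteq> {#} \<and> zero_sum X" "sum_mset F \<subseteq># S - A"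
    using Suc.IH unfolding has_k_disjoint_zs_def by blast
  have "sum_mset (add_mset A F) \<subseteq># S"
    using F(3) A(1) T(1) by (simp add: subset_mset.le_diff_conv2 add.commute)
  then show ?case unfolding has_k_disjoint_zs_def using F A by (auto intro!: exI[of _ "add_mset A F"])
qed

lemma has_k_disjoint_zs_if_Dk_le:
  fixes S :: "'a::{ab_group_add, finite} multiset"
  assumes "Dk (UNIV :: 'a set) k \<le> size S"
  shows "has_k_disjoint_zs S k"
proof -
  let ?P = "\<lambda>l. \<forall>S::'a multiset. set_mset S \<subseteq> UNIV \<and> l \<le> size S \<longrightarrow> has_k_disjoint_zs S k"
  have "?P (k * card (UNIV :: 'a set))" by (simp add: has_k_disjoint_zs_if_size_ge)
  then have "?P (Dk (UNIV :: 'a set) k)" unfolding Dk_def by (rule LeastI[of ?P])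
  with assms show ?thesis by blast
qed

lemma not_has_k_disjoint_zs_empty: "1 \<le> k \<Longrightarrow> \<not> has_k_disjoint_zs {#} k"
proof
  assume "1 \<le> k" "has_k_disjoint_zs {#} k"
  then obtain F where "size F = k" "\<forall>X\<in>#F. X \<noteq> {#}" "sum_mset F = {#}"
    unfolding has_k_disjoint_zs_def by auto
  with \<open>1 \<le> k\<close> show False by (metis One_nat_def not_less_eq_eq size_le_size_sum_mset size_empty)
qed

lemma one_le_Dk:
  assumes "1 \<le> k"
  shows "1 \<le> Dk (UNIV :: 'a::{ab_group_add, finite} set) k"
proof (rule ccontr)
  assume "\<not> 1 \<le> Dk (UNIV :: 'a set) k"
  then have "Dk (UNIV :: 'a set) k \<le> size ({#} :: 'a multiset)" by simp
  with not_has_k_disjoint_zs_empty[OF assms] show False by (blast dest: has_k_disjoint_zs_if_Dk_le)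
qed

lemma ex_not_has_k_disjoint_zs_size_Dk:
  assumes "1 \<le> k"
  shows "\<exists>S :: 'a::{ab_group_add, finite} multiset.
    size S = Dk (UNIV :: 'a set) k - 1 \<and> \<not> has_k_disjoint_zs S k"
proof -
  have "\<not> (\<forall>S::'a multiset. set_mset S \<subseteq> UNIV \<and> Dk (UNIV :: 'a set) k - 1 \<le> size S
      \<longrightarrow> has_k_disjoint_zs S k)"
    using one_le_Dk[OF assms, where 'a='a] unfolding Dk_def by (intro not_less_Least) simp
  then obtain S :: "'a multiset" where "Dk (UNIV :: 'a set) k - 1 \<le> size S" "\<not> has_k_disjoint_zs S k"
    by blast
  moreover from this have "size S < Dk (UNIV :: 'a set) k"
    using has_k_disjoint_zs_if_Dk_le not_less by blast
  ultimately show ?thesis by (intro exI[of _ S]) simp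
qed

subsection \<open>Extremal zero-sum sequences\<close>

lemma size_le_Dk_if_Max_Lset_le:
  fixes C :: "'a::{ab_group_add, finite} multiset"
  assumes C: "zero_sum C" and "Max (Lset C) \<le> k"
  shows "size C \<le> Dk (UNIV :: 'a set) k"
proof (rule ccontr)
  assume "\<not> ?thesis"
  then have "C \<noteq> {#}" by auto
  then obtain x C' where "C = add_mset x C'" by (metis multi_nonempty_split)
  with \<open>\<not> ?thesis\<close> have C': "C = add_mset x C'" "Dk (UNIV :: 'a set) k \<le> size C'" by auto
  then obtain F where F: "size F = k" "\<forall>X\<in>#F. X \<noteq> {#} \<and> zero_sum X" "sum_mset F \<subseteq># C'"
    using has_k_disjoint_zs_if_Dk_le unfolding has_k_disjoint_zs_def by blast
  define R where "R = C - sum_mset F"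
  have "C' \<subseteq># C" using C'(1) by simp
  with F(3) have FC: "sum_mset F \<subseteq># C" by (rule subset_mset.order_trans)
  text \<open>The complement \<open>R\<close> contains \<open>x\<close>, so \<open>C\<close> is a product of \<open>k + 1\<close> non-empty zero-sums.\<close>
  have "x \<in># R"
    unfolding R_def using mset_subset_eq_count[OF F(3), of x] C'(1) by (simp add: in_diff_count)
  then have "R \<noteq> {#}" by auto
  moreover have "zero_sum R"
    unfolding R_def using zero_sum_minus[OF C zero_sum_sum_mset FC] F(2) by blast
  moreover have "C = sum_mset (add_mset R F)" using FC by (simp add: R_def)
  ultimately have "k + 1 \<le> Max (Lset C)"
    using size_le_Max_Lset_sum_mset[of "add_mset R F"] F(1,2) by auto
  with assms(2) show False by simp
qed

lemma ex_zero_sum_Max_Lset_le_size_Dk: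
  assumes "1 \<le> k"
  shows "\<exists>C :: 'a::{ab_group_add, finite} multiset.
    zero_sum C \<and> Max (Lset C) \<le> k \<and> size C = Dk (UNIV :: 'a set) k"
proof -
  obtain S :: "'a multiset" where S: "size S = Dk (UNIV :: 'a set) k - 1" "\<not> has_k_disjoint_zs S k"
    using ex_not_has_k_disjoint_zs_size_Dk[OF assms] by blast
  define y where "y = - sum_mset S"
  define C where "C = add_mset y S"
  have C: "zero_sum C" by (simp add: C_def y_def zero_sum_def)
  have "t \<le> k" if "t \<in> Lset C" for t
  proof (rule ccontr)
    assume "\<not> t \<le> k"
    obtain F where F: "\<forall>A\<in>#F. minimal_zero_sum A" "sum_mset F = C" "size F = t"
      using \<open>t \<in> Lset C\<close> by (rule LsetE)
    then have "y \<in># sum_mset F" by (simp add: C_def)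
    then obtain A F' where F': "F = add_mset (add_mset y A) F'"
      by (rule member_sum_mset_split)
    text \<open>All atoms except the one containing \<open>y\<close> are disjoint zero-sum subsequences of \<open>S\<close>.\<close>
    have "A + sum_mset F' = S" using F(2) F' by (simp add: C_def)
    then have "sum_mset F' \<subseteq># S" by (metis mset_subset_eq_add_right)
    moreover obtain F'' where "F'' \<subseteq># F'" "size F'' = k"
      using ex_submset_size[of k F'] F(3) F' \<open>\<not> t \<le> k\<close> by auto
    ultimately have "sum_mset F'' \<subseteq># S" using sum_mset_mono_submset
      by (metis subset_mset.order_trans)
    moreover have "\<forall>X\<in>#F''. X \<noteq> {#} \<and> zero_sum X"
    proof
      fix X assume "X \<in># F''"
      then have "X \<in># F" using \<open>F'' \<subseteq># F'\<close> F' by (auto dest: mset_subset_eqD)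
      with F(1) show "X \<noteq> {#} \<and> zero_sum X" by (blast dest: minimal_zero_sumD)
    qed
    ultimately have "has_k_disjoint_zs S k"
      unfolding has_k_disjoint_zs_def using \<open>size F'' = k\<close> by blast
    with S(2) show False ..
  qed
  then have "Max (Lset C) \<le> k" using C by (rule Max_Lset_leI[rotated])
  moreover have "size C = Dk (UNIV :: 'a set) k" using S(1) one_le_Dk[OF assms, where 'a='a] by (simp add: C_def)
  ultimately show ?thesis using C by blast
qed

lemma Dk_plus_one_ge:
  fixes g :: "'a::{ab_group_add, finite}"
  assumes "g \<noteq> 0" and "1 \<le> k"
  shows "Dk (UNIV :: 'a set) k + 2 \<le> Dk (UNIV :: 'a set) (k + 1)"
proof -
  obtain C :: "'a multiset" where C: "zero_sum C" "Max (Lset C) \<le> k" "size C = Dk (UNIV :: 'a set) k"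
    using ex_zero_sum_Max_Lset_le_size_Dk[OF assms(2)] by blast
  then have "Max (Lset (C + {#-g, g#})) \<le> k + 1"
    using Max_Lset_plus_inverse_pair[OF C(1) assms(1)] by simp
  then have "size (C + {#-g, g#}) \<le> Dk (UNIV :: 'a set) (k + 1)"
    using zero_sum_plus[OF C(1) zero_sum_inverse_pair] by (rule size_le_Dk_if_Max_Lset_le[rotated])
  with C(3) show ?thesis by simp
qed

lemma zero_not_in_if_Max_Lset_le_size_Dk:
  fixes C :: "'a::{ab_group_add, finite} multiset" and g :: 'a
  assumes "g \<noteq> 0" and C: "zero_sum C" "Max (Lset C) \<le> k" "size C = Dk (UNIV :: 'a set) k"
  shows "0 \<notin># C"
proof
  assume "0 \<in># C"
  then obtain C' where C': "C = add_mset 0 C'" by (metis insert_DiffM)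
  have C'_zs: "zero_sum C'" using C(1) C' by (simp add: zero_sum_def)
  have "1 + t \<in> Lset C" if "t \<in> Lset C'" for t
    using Lset_plus[OF one_in_Lset[OF minimal_zero_sum_zero] that] C' by simp
  then have "1 + Max (Lset C') \<le> k"
    using C(2) Max_Lset_in[OF C'_zs] Max_Lset_ge le_trans by blast
  then have "Max (Lset (C' + {#-g, g#})) \<le> k"
    using Max_Lset_plus_inverse_pair[OF C'_zs assms(1)] by simp
  then have "size (C' + {#-g, g#}) \<le> Dk (UNIV :: 'a set) k"
    using zero_sum_plus[OF C'_zs zero_sum_inverse_pair] by (rule size_le_Dk_if_Max_Lset_le[rotated])
  with C(3) C' show False by simp
qed

theorem lemma6p1:
  fixes B :: "'a::{ab_group_add, finite} multiset" and g :: 'a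
  assumes nontriv: "(UNIV :: 'a set) \<noteq> {0}"
    and B: "zero_sum B"
    and g: "g \<noteq> 0"
  shows "Max (Lset (B + {#-g, g#})) = 1 + Max (Lset B)
     \<and> (\<forall>k\<ge>1. Dk (UNIV :: 'a set) (k + 1) \<ge> Dk (UNIV :: 'a set) k + 2)
     \<and> (\<forall>k\<ge>1. \<forall>C :: 'a multiset. zero_sum C \<and> Max (Lset C) \<le> k
            \<and> size C = Dk (UNIV :: 'a set) k \<longrightarrow> 0 \<notin># C)"
  using Max_Lset_plus_inverse_pair[OF B g] Dk_plus_one_ge[OF g]
    zero_not_in_if_Max_Lset_le_size_Dk[OF g] by blast

end
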